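(* Let $d\ge 2$, $\mathcal{D}\subset\mathbb{R}^d$ open and bounded, $\mathcal{K}=\{0,\dots,\kappa-1\}$, $\boldsymbol{\phi}\in\mathcal{C}^\infty(\mathbb{R}^d,\mathbb{R}^\kappa)$. For all $k\in\mathcal{K}$, $$\mathcal{D}\cap\bigcup_{\mathcal{I}\in\mathbb{I}_k^2}\mathcal{E}_{\mathcal{I}}(\boldsymbol{\phi})=\mathcal{D}\cap\bigcup_{\mathcal{I}\in\mathbb{I}_k^r,\,r\ge 2}\mathcal{E}_{\mathcal{I}}(\boldsymbol{\phi})\subset\mathcal{D}\cap\partial\Omega_k(\boldsymbol{\phi}).$$ If in addition $|D\widehat{\boldsymbol{\phi}}_{\mathcal{I}}|>0$ on $\mathcal{M}_{\mathcal{I}}(\boldsymbol{\phi})$ for all $\mathcal{I}\in\mathbb{I}_k^2$, then $$\mathcal{D}\cap\bigcup_{\mathcal{I}\in\mathbb{I}_k^2}\mathcal{E}_{\mathcal{I}}(\boldsymbol{\phi})=\mathcal{D}\cap\bigcup_{\mathcal{I}\in\mathbb{I}_k^r,\,r\ge 2}\mathcal{E}_{\mathcal{I}}(\boldsymbol{\phi})=\mathcal{D}\cap\partial\Omega_k(\boldsymbol{\phi}).$$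
   Context: $\boldsymbol{\phi}=(\phi_0,\dots,\phi_{\kappa-1})$. For $j\in\mathcal{K}$, $\Omega_j(\boldsymbol{\phi})=\operatorname{int}\{x\in\mathcal{D}\mid\phi_j(x)\le\phi_m(x)\ \forall m\ne j\}$. $\mathbb{I}_k^r=\{\mathcal{I}\subset\mathcal{K}\mid|\mathcal{I}|=r,\ k\in\mathcal{I}\}$. For $\mathcal{I}=\{k_1<\dots<k_{|\mathcal{I}|}\}$, $\widehat{\boldsymbol{\phi}}_{\mathcal{I}}=(\phi_{k_1}-\phi_{k_2},\dots,\phi_{k_1}-\phi_{k_{|\mathcal{I}|}})$, $\mathcal{M}_{\mathcal{I}}(\boldsymbol{\phi})=\{x\in\overline{\mathcal{D}}\mid\widehat{\boldsymbol{\phi}}_{\mathcal{I}}(x)=0\}$, and $\mathcal{E}_{\mathcal{I}}(\boldsymbol{\phi})=\bigcap_{j\in\mathcal{I}}\partial\Omega_j(\boldsymbol{\phi})$ (boundaries in $\mathbb{R}^d$). *)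

theory Defs
  imports "HOL-Analysis.Analysis"
begin

text \<open>C-infinity: derivatives of every order exist everywhere. F vs is the iterated
directional derivative of f along the directions in the list vs (innermost last).\<close>
definition smooth_fun :: "('a::euclidean_space \<Rightarrow> real) \<Rightarrow> bool" where
  "smooth_fun f \<longleftrightarrow> (\<exists>F :: 'a list \<Rightarrow> 'a \<Rightarrow> real. F [] = f \<and>
     (\<forall>vs x. (F vs has_derivative (\<lambda>h. F (h # vs) x)) (at x)))"

definition Omega :: "nat \<Rightarrow> 'a::euclidean_space set \<Rightarrow> (nat \<Rightarrow> 'a \<Rightarrow> real) \<Rightarrow> nat \<Rightarrow> 'a set" where
  "Omega \<kappa> D \<phi> j = interior {x \<in> D. \<forall>m\<in>{..<\<kappa>}. m \<noteq> j \<longrightarrow> \<phi> j x \<le> \<phi> m x}"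

definition Iset :: "nat \<Rightarrow> nat \<Rightarrow> nat \<Rightarrow> nat set set" where
  "Iset \<kappa> k r = {I. I \<subseteq> {..<\<kappa>} \<and> card I = r \<and> k \<in> I}"

text \<open>M_I: zero set in closure D of hat-phi_I = (phi_{k1} - phi_{k2}, ..., phi_{k1} - phi_{kr}),
  k1 = Min I.\<close>
definition Mset :: "'a::euclidean_space set \<Rightarrow> (nat \<Rightarrow> 'a \<Rightarrow> real) \<Rightarrow> nat set \<Rightarrow> 'a set" where
  "Mset D \<phi> I = {x \<in> closure D. \<forall>i\<in>I - {Min I}. \<phi> (Min I) x - \<phi> i x = 0}"

definition Eset :: "nat \<Rightarrow> 'a::euclidean_space set \<Rightarrow> (nat \<Rightarrow> 'a \<Rightarrow> real) \<Rightarrow> nat set \<Rightarrow> 'a set" where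
  "Eset \<kappa> D \<phi> I = (\<Inter>j\<in>I. frontier (Omega \<kappa> D \<phi> j))"

end

theory Submission
  imports Defs
begin

text \<open>Each \<open>\<E>\<^sub>\<I>\<close> is an intersection of frontiers, so enlarging \<open>\<I>\<close> shrinks it: the sets
  with \<open>|\<I>| \<ge> 2\<close> are covered by those of the pairs \<open>{k, j}\<close>, and all of them lie on
  \<open>\<partial>\<Omega>\<^sub>k\<close>. Conversely, let \<open>x \<in> \<D> \<inter> \<partial>\<Omega>\<^sub>k\<close>. Near \<open>x\<close>, the open set where \<open>\<phi>\<^sub>k\<close> is not
  minimal is covered by the finitely many closed sets \<open>{\<phi>\<^sub>m minimal}\<close>, \<open>m \<noteq> k\<close>, and an open
  set covered by finitely many closed sets lies in the closure of their interiors; hence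
  \<open>x \<in> closure \<Omega>\<^sub>m\<close> for some \<open>m \<noteq> k\<close>. If \<open>x\<close> were in \<open>\<Omega>\<^sub>m\<close>, the open set \<open>\<Omega>\<^sub>k \<inter> \<Omega>\<^sub>m\<close> would
  be nonempty and \<open>\<phi>\<^sub>k - \<phi>\<^sub>m\<close> would vanish identically on it, contradicting the nondegeneracy
  of its derivative; so \<open>x \<in> \<partial>\<Omega>\<^sub>k \<inter> \<partial>\<Omega>\<^sub>m\<close>.\<close>

lemma interior_Union_closed_empty_interior:
  assumes "finite F" "\<And>m. m \<in> F \<Longrightarrow> closed (C m)" "\<And>m. m \<in> F \<Longrightarrow> interior (C m) = {}"
  shows "interior (\<Union>m\<in>F. C m) = {}"
  using assms
proof (induction F rule: finite_induct)
  case (insert m F)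
  then have "interior (C m \<union> (\<Union>m\<in>F. C m)) = interior (C m)"
    by (intro interior_closed_Un_empty_interior) auto
  with insert.prems show ?case by simp
qed simp

lemma closure_open_subset_Union_closure_interior:
  fixes C :: "'i \<Rightarrow> 'a::topological_space set"
  assumes "finite F" "\<And>m. m \<in> F \<Longrightarrow> closed (C m)" "open U" "U \<subseteq> (\<Union>m\<in>F. C m)"
  shows "closure U \<subseteq> (\<Union>m\<in>F. closure (interior (C m)))"
proof -
  define W where "W = U - closure (\<Union>m\<in>F. interior (C m))"
  have "W \<subseteq> (\<Union>m\<in>F. C m - interior (C m))"
  proof
    fix y assume "y \<in> W"
    then obtain m where "m \<in> F" "y \<in> C m" "y \<notin> closure (\<Union>m\<in>F. interior (C m))"
      using assms(4) unfolding W_def by blast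
    then show "y \<in> (\<Union>m\<in>F. C m - interior (C m))"
      using closure_subset[of "\<Union>m\<in>F. interior (C m)"] by blast
  qed
  moreover have "interior (\<Union>m\<in>F. C m - interior (C m)) = {}"
  proof (rule interior_Union_closed_empty_interior)
    fix m assume "m \<in> F"
    then show "closed (C m - interior (C m))"
      using assms(2) by (simp add: closed_Diff)
    show "interior (C m - interior (C m)) = {}"
      using interior_mono[of "C m - interior (C m)" "C m"] interior_subset by blast
  qed (use assms(1) in simp)
  moreover have "open W"
    using assms(3) by (simp add: W_def open_Diff)
  ultimately have "W = {}"
    using interior_maximal by blast
  then have "closure U \<subseteq> closure (\<Union>m\<in>F. interior (C m))"
    unfolding W_def by (simp add: closure_minimal)
  also have "\<dots> = (\<Union>m\<in>F. closure (interior (C m)))"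
    using closure_of_Union[of "(\<lambda>m. interior (C m)) ` F" euclidean] assms(1) by simp
  finally show ?thesis .
qed

lemma smooth_fun_continuous_on:
  assumes "smooth_fun f"
  shows "continuous_on S f"
proof -
  obtain F where "F [] = f" "\<And>vs x. (F vs has_derivative (\<lambda>h. F (h # vs) x)) (at x)"
    using assms unfolding smooth_fun_def by blast
  then have "isCont f x" for x
    using has_derivative_continuous by metis
  then show ?thesis
    by (simp add: continuous_at_imp_continuous_on)
qed

definition min_region :: "nat \<Rightarrow> (nat \<Rightarrow> 'a \<Rightarrow> real) \<Rightarrow> nat \<Rightarrow> 'a set" where
  "min_region \<kappa> \<phi> j = {x. \<forall>m\<in>{..<\<kappa>}. m \<noteq> j \<longrightarrow> \<phi> j x \<le> \<phi> m x}"

definition nonvanishing_derivative_on :: "('a::real_normed_vector \<Rightarrow> real) \<Rightarrow> 'a set \<Rightarrow> bool" where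
  "nonvanishing_derivative_on f S \<longleftrightarrow>
     (\<forall>x\<in>S. \<forall>f'. (f has_derivative f') (at x) \<longrightarrow> f' \<noteq> (\<lambda>h. 0))"

lemma closed_min_region:
  assumes "\<forall>m\<in>{..<\<kappa>}. continuous_on UNIV (\<phi> m)" "j < \<kappa>"
  shows "closed (min_region \<kappa> \<phi> j)"
proof -
  have "min_region \<kappa> \<phi> j = (\<Inter>m\<in>{..<\<kappa>} - {j}. {x. \<phi> j x \<le> \<phi> m x})"
    by (auto simp: min_region_def)
  then show ?thesis
    using assms by (auto intro!: closed_INT closed_Collect_le)
qed

lemma Compl_min_region_subset:
  assumes "k < \<kappa>"
  shows "- min_region \<kappa> \<phi> k \<subseteq> (\<Union>m\<in>{..<\<kappa>} - {k}. min_region \<kappa> \<phi> m)"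
proof
  fix x assume x: "x \<in> - min_region \<kappa> \<phi> k"
  have "Min ((\<lambda>i. \<phi> i x) ` {..<\<kappa>}) \<in> (\<lambda>i. \<phi> i x) ` {..<\<kappa>}"
    using assms by (intro Min_in) auto
  then obtain m where m: "m < \<kappa>" "\<phi> m x = Min ((\<lambda>i. \<phi> i x) ` {..<\<kappa>})"
    by auto
  then have "x \<in> min_region \<kappa> \<phi> m"
    by (auto simp: min_region_def)
  with x m show "x \<in> (\<Union>m\<in>{..<\<kappa>} - {k}. min_region \<kappa> \<phi> m)"
    by auto
qed

lemma min_region_eq:
  assumes "j < \<kappa>" "m < \<kappa>" "x \<in> min_region \<kappa> \<phi> j" "x \<in> min_region \<kappa> \<phi> m"
  shows "\<phi> j x = \<phi> m x"
  using assms by (cases "j = m") (auto simp: min_region_def intro: antisym)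

lemma Omega_eq_Int_interior_min_region:
  assumes "open D"
  shows "Omega \<kappa> D \<phi> j = D \<inter> interior (min_region \<kappa> \<phi> j)"
proof -
  have "Omega \<kappa> D \<phi> j = interior (D \<inter> min_region \<kappa> \<phi> j)"
    unfolding Omega_def min_region_def by (rule arg_cong[where f = interior]) auto
  with assms show ?thesis
    by (simp add: interior_open)
qed

lemma open_Omega: "open (Omega \<kappa> D \<phi> j)"
  by (simp add: Omega_def)

lemma Omega_subset_min_region: "Omega \<kappa> D \<phi> j \<subseteq> D \<inter> min_region \<kappa> \<phi> j"
  unfolding Omega_def min_region_def using interior_subset by blast

lemma Eset_antimono: "I \<subseteq> J \<Longrightarrow> Eset \<kappa> D \<phi> J \<subseteq> Eset \<kappa> D \<phi> I"
  unfolding Eset_def by blast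

lemma Eset_subset_frontier_Omega: "k \<in> I \<Longrightarrow> Eset \<kappa> D \<phi> I \<subseteq> frontier (Omega \<kappa> D \<phi> k)"
  unfolding Eset_def by blast

lemma Union_Eset_Iset_eq_pairs:
  "(\<Union>r\<in>{2..}. \<Union>I\<in>Iset \<kappa> k r. Eset \<kappa> D \<phi> I) = (\<Union>I\<in>Iset \<kappa> k 2. Eset \<kappa> D \<phi> I)"
proof (intro equalityI subsetI)
  fix x assume "x \<in> (\<Union>r\<in>{2..}. \<Union>I\<in>Iset \<kappa> k r. Eset \<kappa> D \<phi> I)"
  then obtain r I where r: "r \<ge> 2" "I \<in> Iset \<kappa> k r" "x \<in> Eset \<kappa> D \<phi> I"
    by auto
  then have "\<not> I \<subseteq> {k}"
    using card_mono[of "{k}" I] by (auto simp: Iset_def)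
  then obtain j where j: "j \<in> I" "j \<noteq> k"
    by blast
  with r have "{k, j} \<in> Iset \<kappa> k 2" "x \<in> Eset \<kappa> D \<phi> {k, j}"
    using Eset_antimono[of "{k, j}" I] by (auto simp: Iset_def)
  then show "x \<in> (\<Union>I\<in>Iset \<kappa> k 2. Eset \<kappa> D \<phi> I)"
    by blast
qed auto

lemma frontier_Omega_subset_closure_Omega:
  assumes "open D" "\<forall>m\<in>{..<\<kappa>}. continuous_on UNIV (\<phi> m)" "k < \<kappa>"
    and x: "x \<in> D \<inter> frontier (Omega \<kappa> D \<phi> k)"
  shows "\<exists>m\<in>{..<\<kappa>} - {k}. x \<in> closure (Omega \<kappa> D \<phi> m)"
proof -
  let ?A = "min_region \<kappa> \<phi>"
  note Omega_eq = Omega_eq_Int_interior_min_region[OF assms(1)]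
  have "x \<in> D" "x \<notin> Omega \<kappa> D \<phi> k"
    using x by (auto simp: frontier_def interior_open[OF open_Omega])
  then have "x \<in> closure (- ?A k)"
    by (simp add: Omega_eq closure_interior)
  with \<open>x \<in> D\<close> have "x \<in> closure (D - ?A k)"
    using open_Int_closure_subset[OF assms(1), of "- ?A k"] by (auto simp: Diff_eq)
  moreover have "open (D - ?A k)"
    using assms(1) closed_min_region[OF assms(2,3)] by (rule open_Diff)
  moreover have "D - ?A k \<subseteq> (\<Union>m\<in>{..<\<kappa>} - {k}. ?A m)"
    by (rule order_trans[OF _ Compl_min_region_subset[OF assms(3)]]) blast
  moreover have "closed (?A m)" if "m \<in> {..<\<kappa>} - {k}" for m
    using that closed_min_region[OF assms(2)] by simp
  ultimately obtain m where m: "m \<in> {..<\<kappa>} - {k}" "x \<in> closure (interior (?A m))"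
    using closure_open_subset_Union_closure_interior[of "{..<\<kappa>} - {k}" ?A "D - ?A k"] by blast
  with \<open>x \<in> D\<close> have "x \<in> closure (Omega \<kappa> D \<phi> m)"
    using open_Int_closure_subset[OF assms(1), of "interior (?A m)"] by (auto simp: Omega_eq)
  with m show ?thesis
    by blast
qed

lemma Inter_Omega_subset_Mset:
  assumes "I \<subseteq> {..<\<kappa>}" "I \<noteq> {}"
  shows "(\<Inter>i\<in>I. Omega \<kappa> D \<phi> i) \<subseteq> Mset D \<phi> I"
proof
  fix y assume y: "y \<in> (\<Inter>i\<in>I. Omega \<kappa> D \<phi> i)"
  have "finite I"
    using assms(1) by (rule finite_subset) simp
  then have "Min I \<in> I"
    using assms(2) by (rule Min_in)
  have y_min: "y \<in> D \<inter> min_region \<kappa> \<phi> i" if "i \<in> I" for i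
    using y that Omega_subset_min_region by blast
  have "\<phi> (Min I) y = \<phi> i y" if "i \<in> I" for i
    using y_min[OF that] y_min[OF \<open>Min I \<in> I\<close>] that \<open>Min I \<in> I\<close> assms(1)
    by (intro min_region_eq) auto
  moreover have "y \<in> closure D"
    using y_min[OF \<open>Min I \<in> I\<close>] closure_subset by blast
  ultimately show "y \<in> Mset D \<phi> I"
    by (simp add: Mset_def)
qed

lemma Inter_Omega_empty_if_nonvanishing_derivative:
  assumes "I \<subseteq> {..<\<kappa>}" "I \<noteq> {}"
    and "nonvanishing_derivative_on (\<lambda>y. \<phi> (Min I) y - \<phi> (Max I) y) (Mset D \<phi> I)"
  shows "(\<Inter>i\<in>I. Omega \<kappa> D \<phi> i) = {}"
proof (rule ccontr)
  let ?W = "\<Inter>i\<in>I. Omega \<kappa> D \<phi> i"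
  assume "?W \<noteq> {}"
  then obtain y where y: "y \<in> ?W"
    by blast
  have "finite I"
    using assms(1) by (rule finite_subset) simp
  then have MinMax: "Min I \<in> I" "Max I \<in> I"
    using assms(2) by (auto intro: Min_in Max_in)
  have "open ?W"
    using \<open>finite I\<close> by (intro open_INT ballI open_Omega)
  have eq: "\<phi> (Min I) z = \<phi> (Max I) z" if "z \<in> ?W" for z
  proof (rule min_region_eq)
    show "Min I < \<kappa>" "Max I < \<kappa>"
      using MinMax assms(1) by auto
    show "z \<in> min_region \<kappa> \<phi> (Min I)" "z \<in> min_region \<kappa> \<phi> (Max I)"
      using that MinMax Omega_subset_min_region[of \<kappa> D \<phi>] by blast+
  qed
  have "((\<lambda>z. \<phi> (Min I) z - \<phi> (Max I) z) has_derivative (\<lambda>h. 0)) (at y)"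
  proof (rule has_derivative_transform_within_open[OF _ \<open>open ?W\<close> y])
    show "((\<lambda>_. 0) has_derivative (\<lambda>h. 0)) (at y)"
      by (rule has_derivative_const)
    fix z assume "z \<in> ?W"
    then show "0 = \<phi> (Min I) z - \<phi> (Max I) z"
      using eq by simp
  qed
  moreover have "y \<in> Mset D \<phi> I"
    using y Inter_Omega_subset_Mset[OF assms(1,2)] by blast
  ultimately show False
    using assms(3) by (auto simp: nonvanishing_derivative_on_def)
qed

lemma frontier_Omega_subset_Union_Eset_pairs:
  assumes "open D" "\<forall>m\<in>{..<\<kappa>}. continuous_on UNIV (\<phi> m)" "k < \<kappa>"
    and nondeg: "\<forall>I\<in>Iset \<kappa> k 2.
      nonvanishing_derivative_on (\<lambda>y. \<phi> (Min I) y - \<phi> (Max I) y) (Mset D \<phi> I)"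
  shows "D \<inter> frontier (Omega \<kappa> D \<phi> k) \<subseteq> (\<Union>I\<in>Iset \<kappa> k 2. Eset \<kappa> D \<phi> I)"
proof
  fix x assume x: "x \<in> D \<inter> frontier (Omega \<kappa> D \<phi> k)"
  then obtain m where m: "m \<in> {..<\<kappa>} - {k}" "x \<in> closure (Omega \<kappa> D \<phi> m)"
    using frontier_Omega_subset_closure_Omega[OF assms(1-3)] by blast
  then have I: "{k, m} \<in> Iset \<kappa> k 2"
    using assms(3) by (auto simp: Iset_def)
  with m assms(3) have "(\<Inter>i\<in>{k, m}. Omega \<kappa> D \<phi> i) = {}"
    by (intro Inter_Omega_empty_if_nonvanishing_derivative nondeg[rule_format]) auto
  then have "Omega \<kappa> D \<phi> m \<inter> closure (Omega \<kappa> D \<phi> k) = {}"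
    using open_Int_closure_eq_empty[OF open_Omega[of \<kappa> D \<phi> m], of "Omega \<kappa> D \<phi> k"] by blast
  moreover have "x \<in> closure (Omega \<kappa> D \<phi> k)"
    using x by (simp add: frontier_def)
  ultimately have "x \<notin> Omega \<kappa> D \<phi> m"
    by blast
  with m x have "x \<in> Eset \<kappa> D \<phi> {k, m}"
    by (simp add: Eset_def frontier_def interior_open[OF open_Omega])
  with I show "x \<in> (\<Union>I\<in>Iset \<kappa> k 2. Eset \<kappa> D \<phi> I)"
    by blast
qed

theorem lemma2p6:
  fixes D :: "'a::euclidean_space set" and \<kappa> k :: nat and \<phi> :: "nat \<Rightarrow> 'a \<Rightarrow> real"
  assumes "DIM('a) \<ge> 2" and "open D" and "bounded D"
    and "\<forall>j\<in>{..<\<kappa>}. smooth_fun (\<phi> j)"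
    and "k \<in> {..<\<kappa>}"
  shows "D \<inter> (\<Union>I\<in>Iset \<kappa> k 2. Eset \<kappa> D \<phi> I) = D \<inter> (\<Union>r\<in>{2..}. \<Union>I\<in>Iset \<kappa> k r. Eset \<kappa> D \<phi> I)
       \<and> D \<inter> (\<Union>r\<in>{2..}. \<Union>I\<in>Iset \<kappa> k r. Eset \<kappa> D \<phi> I) \<subseteq> D \<inter> frontier (Omega \<kappa> D \<phi> k)
       \<and> ((\<forall>I\<in>Iset \<kappa> k 2. \<forall>x\<in>Mset D \<phi> I.
              \<forall>f'. ((\<lambda>y. \<phi> (Min I) y - \<phi> (Max I) y) has_derivative f') (at x) \<longrightarrow> f' \<noteq> (\<lambda>h. 0))
          \<longrightarrow> D \<inter> (\<Union>r\<in>{2..}. \<Union>I\<in>Iset \<kappa> k r. Eset \<kappa> D \<phi> I) = D \<inter> frontier (Omega \<kappa> D \<phi> k))"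
proof -
  have cont: "\<forall>m\<in>{..<\<kappa>}. continuous_on UNIV (\<phi> m)"
    using assms(4) smooth_fun_continuous_on by blast
  have pairs: "(\<Union>r\<in>{2..}. \<Union>I\<in>Iset \<kappa> k r. Eset \<kappa> D \<phi> I) = (\<Union>I\<in>Iset \<kappa> k 2. Eset \<kappa> D \<phi> I)"
    by (rule Union_Eset_Iset_eq_pairs)
  have on_frontier: "(\<Union>I\<in>Iset \<kappa> k 2. Eset \<kappa> D \<phi> I) \<subseteq> frontier (Omega \<kappa> D \<phi> k)"
    using Eset_subset_frontier_Omega by (fastforce simp: Iset_def)
  have "D \<inter> frontier (Omega \<kappa> D \<phi> k) \<subseteq> (\<Union>I\<in>Iset \<kappa> k 2. Eset \<kappa> D \<phi> I)"
    if "\<forall>I\<in>Iset \<kappa> k 2. \<forall>x\<in>Mset D \<phi> I.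
          \<forall>f'. ((\<lambda>y. \<phi> (Min I) y - \<phi> (Max I) y) has_derivative f') (at x) \<longrightarrow> f' \<noteq> (\<lambda>h. 0)"
    using frontier_Omega_subset_Union_Eset_pairs[OF assms(2) cont] assms(5) that
    by (simp add: nonvanishing_derivative_on_def)
  with pairs on_frontier show ?thesis
    by blast
qed

end
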